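(* Let $f(z)=z+\sum_{n=2}^{\infty}a_nz^n$ belong to $\mathcal{S}^*_{\xi}$. Then $|a_3-a_2^2|\le \frac12$. The bound is sharp: equality holds for some function in $\mathcal{S}^*_{\xi}$.
   Context: $\mathbb{D}=\{z\in\mathbb{C}:|z|<1\}$. $\mathcal{A}$ is the class of analytic functions $f$ on $\mathbb{D}$ of the form $f(z)=z+\sum_{n\ge2}a_nz^n$. For analytic $f,g$ on $\mathbb{D}$, $f\prec g$ means there is an analytic $w:\mathbb{D}\to\mathbb{D}$ with $w(0)=0$ and $f=g\circ w$. Let $\xi(z)=1+\frac{\sin z}{1-z}$ for $z\in\mathbb{D}$, and $\mathcal{S}^*_{\xi}=\{f\in\mathcal{A}: \frac{zf'(z)}{f(z)}\prec \xi(z)\}$. *)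

theory Defs
  imports "HOL-Complex_Analysis.Complex_Analysis"
begin

abbreviation unit_disc :: "complex set" where
  "unit_disc \<equiv> ball 0 1"

definition classA :: "(complex \<Rightarrow> complex) set" where
  "classA = {f. f holomorphic_on unit_disc \<and> f 0 = 0 \<and> deriv f 0 = 1}"

definition coeff0 :: "(complex \<Rightarrow> complex) \<Rightarrow> nat \<Rightarrow> complex" where
  "coeff0 f n = (deriv ^^ n) f 0 / of_nat (fact n)"

definition subordinate :: "(complex \<Rightarrow> complex) \<Rightarrow> (complex \<Rightarrow> complex) \<Rightarrow> bool" where
  "subordinate f g \<longleftrightarrow> f holomorphic_on unit_disc \<and> g holomorphic_on unit_disc \<and>
     (\<exists>w. w holomorphic_on unit_disc \<and> w ` unit_disc \<subseteq> unit_disc \<and> w 0 = 0 \<and>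
          (\<forall>z\<in>unit_disc. f z = g (w z)))"

definition xi :: "complex \<Rightarrow> complex" where
  "xi z = 1 + sin z / (1 - z)"

text \<open>z f'(z)/f(z), extended by its limiting value 1 at z = 0.\<close>
definition zf_over_f :: "(complex \<Rightarrow> complex) \<Rightarrow> complex \<Rightarrow> complex" where
  "zf_over_f f z = (if z = 0 then 1 else z * deriv f z / f z)"

definition S_star_xi :: "(complex \<Rightarrow> complex) set" where
  "S_star_xi = {f \<in> classA. (\<forall>z\<in>unit_disc. z \<noteq> 0 \<longrightarrow> f z \<noteq> 0) \<and>
                           subordinate (zf_over_f f) xi}"

end

theory Submission
  imports Defs
begin

(* Write p = z f'/f = xi o w with w a Schwarz function. Comparing Taylor coefficients in
   z f' = f p gives a3 - a2^2 = (p2 - p1^2)/2, and since xi(u) = 1 + u + u^2 + ... this is w''(0)/4,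
   which the Cauchy estimate bounds by 1/2. Equality holds for w(z) = z^2, and every p with p(0) = 1
   is z f'/f for f(z) = z exp (integral from 0 to z of (p(t) - 1)/t). *)

lemma norm_higher_deriv_le_of_bounded_on_ball:
  fixes f :: "complex \<Rightarrow> complex"
  assumes holf: "f holomorphic_on ball z r" and bnd: "\<And>u. u \<in> ball z r \<Longrightarrow> norm (f u) \<le> B"
    and "0 < r"
  shows "norm ((deriv ^^ n) f z) \<le> fact n * B / r ^ n"
proof -
  have smaller_radius: "norm ((deriv ^^ n) f z) \<le> fact n * B / s ^ n" if s: "0 < s" "s < r" for s
  proof (rule Cauchy_inequality)
    show "f holomorphic_on ball z s"
      using holf by (rule holomorphic_on_subset) (use s in auto)
    show "continuous_on (cball z s) f"
      using holomorphic_on_imp_continuous_on[OF holf] by (rule continuous_on_subset) (use s in auto)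
    show "norm (f u) \<le> B" if "norm (z - u) = s" for u
      using bnd that s by (simp add: dist_norm)
  qed (use s in auto)
  have "\<forall>\<^sub>F s in at_left r. norm ((deriv ^^ n) f z) \<le> fact n * B / s ^ n"
    using eventually_at_left_real[OF \<open>0 < r\<close>]
    by (elim eventually_mono) (auto intro: smaller_radius)
  moreover have "((\<lambda>s. fact n * B / s ^ n) \<longlongrightarrow> fact n * B / r ^ n) (at_left r)"
    using \<open>0 < r\<close> by (intro tendsto_intros) auto
  ultimately show ?thesis
    by (intro tendsto_le[OF trivial_limit_at_left_real _ tendsto_const])
qed

lemma higher_deriv_2_compose:
  fixes g w :: "complex \<Rightarrow> complex"
  assumes g: "g holomorphic_on T" and w: "w holomorphic_on S" and "open S" "open T"
    and wST: "w ` S \<subseteq> T" and z: "z \<in> S"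
  shows "(deriv ^^ 2) (\<lambda>u. g (w u)) z =
           (deriv ^^ 2) g (w z) * (deriv w z)\<^sup>2 + deriv g (w z) * (deriv ^^ 2) w z"
proof -
  have diff_w: "w field_differentiable at u" if "u \<in> S" for u
    using w \<open>open S\<close> that holomorphic_on_imp_differentiable_at by blast
  have diff_g: "g field_differentiable at v" if "v \<in> T" for v
    using g \<open>open T\<close> that holomorphic_on_imp_differentiable_at by blast
  have "\<forall>\<^sub>F u in nhds z. deriv (\<lambda>u. g (w u)) u = deriv g (w u) * deriv w u"
    using eventually_nhds_in_open[OF \<open>open S\<close> z]
    by (elim eventually_mono) (use wST diff_w diff_g deriv_chain[unfolded o_def] in blast)
  then have "(deriv ^^ 2) (\<lambda>u. g (w u)) z = deriv (\<lambda>u. deriv g (w u) * deriv w u) z"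
    by (simp add: eval_nat_numeral deriv_cong_ev)
  also have "\<dots> = deriv (deriv g) (w z) * deriv w z * deriv w z + deriv g (w z) * deriv (deriv w) z"
  proof -
    have "deriv g holomorphic_on T" "deriv w holomorphic_on S"
      using g w \<open>open S\<close> \<open>open T\<close> by (auto intro: holomorphic_deriv)
    then have "deriv g field_differentiable at (w z)" "deriv w field_differentiable at z"
      using \<open>open S\<close> \<open>open T\<close> wST z holomorphic_on_imp_differentiable_at by blast+
    moreover have "(\<lambda>u. deriv g (w u)) field_differentiable at z"
      using field_differentiable_compose[OF diff_w[OF z] \<open>deriv g field_differentiable at (w z)\<close>]
      by (simp add: o_def)
    ultimately show ?thesis
      by (simp add: deriv_chain[unfolded o_def] diff_w z)
  qed
  finally show ?thesis by (simp add: eval_nat_numeral power2_eq_square)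
qed

lemma coeff0_2_3_of_z_deriv_eq_mult:
  assumes holf: "f holomorphic_on S" and holp: "p holomorphic_on S" and "open S" "0 \<in> S"
    and f0: "f 0 = 0" and f'0: "deriv f 0 = 1" and p0: "p 0 = 1"
    and ode: "\<And>z. z \<in> S \<Longrightarrow> z * deriv f z = f z * p z"
  shows "coeff0 f 2 = deriv p 0"
    and "coeff0 f 3 = ((deriv ^^ 2) p 0 / 2 + (deriv p 0)\<^sup>2) / 2"
proof -
  have "deriv f holomorphic_on S"
    using holf \<open>open S\<close> by (rule holomorphic_deriv)
  then have lhs: "(deriv ^^ n) (\<lambda>z. z * deriv f z) 0 =
      (\<Sum>i = 0..n. of_nat (n choose i) * (deriv ^^ i) (\<lambda>z. z) 0 * (deriv ^^ (n-i)) (deriv f) 0)" for n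
    using \<open>open S\<close> \<open>0 \<in> S\<close> by (intro higher_deriv_mult) auto
  have rhs: "(deriv ^^ n) (\<lambda>z. f z * p z) 0 =
      (\<Sum>i = 0..n. of_nat (n choose i) * (deriv ^^ i) f 0 * (deriv ^^ (n-i)) p 0)" for n
    using holf holp \<open>open S\<close> \<open>0 \<in> S\<close> by (rule higher_deriv_mult)
  have "\<forall>\<^sub>F z in nhds 0. z * deriv f z = f z * p z"
    using eventually_nhds_in_open[OF \<open>open S\<close> \<open>0 \<in> S\<close>] by (elim eventually_mono) (rule ode)
  then have ode_derivs: "(deriv ^^ n) (\<lambda>z. z * deriv f z) 0 = (deriv ^^ n) (\<lambda>z. f z * p z) 0" for n
    by (rule higher_deriv_cong_ev) (rule refl)
  have f3: "(deriv ^^ 3) f = (deriv ^^ 2) (deriv f)"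
    by (simp add: eval_nat_numeral funpow_Suc_right del: funpow.simps)
  have f2_0: "deriv (deriv f) 0 = 2 * deriv p 0"
    using ode_derivs[of 2] unfolding lhs rhs by (simp add: eval_nat_numeral f0 f'0 p0)
  have "2 * (deriv ^^ 3) f 0 = 3 * deriv (deriv f) 0 * deriv p 0 + 3 * deriv (deriv p) 0"
    using ode_derivs[of 3] unfolding lhs rhs f3
    by (simp add: eval_nat_numeral f0 f'0 p0 algebra_simps)
  then have f3_0: "(deriv ^^ 3) f 0 = 3 * (deriv p 0)\<^sup>2 + 3 / 2 * (deriv ^^ 2) p 0"
    unfolding f2_0 by (simp add: eval_nat_numeral field_simps power2_eq_square)
  show "coeff0 f 2 = deriv p 0"
    using f2_0 by (simp add: coeff0_def eval_nat_numeral)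
  show "coeff0 f 3 = ((deriv ^^ 2) p 0 / 2 + (deriv p 0)\<^sup>2) / 2"
    using f3_0 by (simp add: coeff0_def eval_nat_numeral field_simps)
qed

lemma exists_classA_with_zf_over_f:
  assumes holp: "p holomorphic_on unit_disc" and p0: "p 0 = 1"
  obtains F where "F \<in> classA" "\<forall>z\<in>unit_disc. z \<noteq> 0 \<longrightarrow> F z \<noteq> 0"
    and "\<forall>z\<in>unit_disc. zf_over_f F z = p z"
proof -
  define q where "q t = (if t = 0 then deriv p 0 else (p t - p 0) / (t - 0))" for t
  have "q holomorphic_on unit_disc"
    unfolding q_def[abs_def] using holp by (rule pole_lemma_open) simp
  then obtain h where h: "\<And>t. t \<in> unit_disc \<Longrightarrow> (h has_field_derivative q t) (at t within unit_disc)"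
    using holomorphic_convex_primitive'[OF convex_ball open_ball] by blast
  have h': "(h has_field_derivative q t) (at t)" if "t \<in> unit_disc" for t
    using h[OF that] at_within_open[OF that open_ball] by simp
  define F where "F z = z * exp (h z - h 0)" for z
  have dF: "(F has_field_derivative exp (h z - h 0) * (1 + z * q z)) (at z)"
    if "z \<in> unit_disc" for z
    unfolding F_def[abs_def] by (rule derivative_eq_intros h'[OF that] refl | simp add: algebra_simps)+
  then have holF: "F holomorphic_on unit_disc"
    using holomorphic_on_open open_ball by blast
  have F0: "F 0 = 0" and F'0: "deriv F 0 = 1"
    using DERIV_imp_deriv[OF dF[of 0]] by (simp_all add: F_def)
  have zf: "zf_over_f F z = p z" if "z \<in> unit_disc" for z
  proof (cases "z = 0")
    case True
    then show ?thesis by (simp add: zf_over_f_def p0)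
  next
    case False
    then have "zf_over_f F z = 1 + z * q z"
      using DERIV_imp_deriv[OF dF[OF that]] by (simp add: zf_over_f_def F_def)
    also have "\<dots> = p z"
      using False by (simp add: q_def p0)
    finally show ?thesis .
  qed
  show ?thesis
  proof
    show "F \<in> classA" using holF F0 F'0 by (simp add: classA_def)
    show "\<forall>z\<in>unit_disc. z \<noteq> 0 \<longrightarrow> F z \<noteq> 0" by (simp add: F_def)
    show "\<forall>z\<in>unit_disc. zf_over_f F z = p z" using zf by blast
  qed
qed

lemma xi_holomorphic: "xi holomorphic_on unit_disc"
  unfolding xi_def[abs_def] by (intro holomorphic_intros) auto

lemma xi_derivs_at_0: "deriv xi 0 = 1" "(deriv ^^ 2) xi 0 = 2"
proof -
  define xi' where "xi' z = (cos z * (1 - z) + sin z) / (1 - z)\<^sup>2" for z :: complex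
  have "(xi has_field_derivative xi' z) (at z)" if "z \<in> unit_disc" for z
  proof -
    have z: "z \<noteq> 1" "1 - z \<noteq> 0" using that by auto
    show ?thesis
      unfolding xi_def[abs_def] xi'_def
      by (rule derivative_eq_intros refl | simp add: z)+ (simp add: z field_simps power2_eq_square)
  qed
  moreover have "\<forall>\<^sub>F z in nhds 0. z \<in> unit_disc"
    by (rule eventually_nhds_in_open) auto
  ultimately have near_0: "\<forall>\<^sub>F z in nhds 0. deriv xi z = xi' z"
    by (elim eventually_mono) (auto intro: DERIV_imp_deriv)
  have "deriv xi 0 = xi' 0"
    using near_0 by (rule eventually_nhds_x_imp_x)
  moreover have "deriv (deriv xi) 0 = deriv xi' 0"
    using near_0 by (rule deriv_cong_ev) (rule refl)
  moreover have "(xi' has_field_derivative 2) (at 0)"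
    unfolding xi'_def[abs_def] by (rule derivative_eq_intros refl | simp)+
  ultimately show "deriv xi 0 = 1" "(deriv ^^ 2) xi 0 = 2"
    by (simp_all add: xi'_def eval_nat_numeral DERIV_imp_deriv)
qed

lemma S_star_xi_fekete_szego_eq:
  assumes f: "f \<in> S_star_xi"
    and w: "w holomorphic_on unit_disc" "w ` unit_disc \<subseteq> unit_disc" "w 0 = 0"
    and subord: "\<forall>z\<in>unit_disc. zf_over_f f z = xi (w z)"
  shows "coeff0 f 3 - (coeff0 f 2)\<^sup>2 = (deriv ^^ 2) w 0 / 4"
proof -
  define p where "p = zf_over_f f"
  have holf: "f holomorphic_on unit_disc" and f0: "f 0 = 0" and f'0: "deriv f 0 = 1"
    and f_nz: "\<forall>z\<in>unit_disc. z \<noteq> 0 \<longrightarrow> f z \<noteq> 0"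
    using f by (auto simp: S_star_xi_def classA_def)
  have holp: "p holomorphic_on unit_disc"
    using holomorphic_on_compose_gen[OF w(1) xi_holomorphic w(2)]
    by (rule holomorphic_transform) (use subord p_def in auto)
  have ode: "z * deriv f z = f z * p z" if "z \<in> unit_disc" for z
    using f_nz that by (auto simp: p_def zf_over_f_def f0)
  have near_0: "\<forall>\<^sub>F z in nhds 0. p z = xi (w z)"
    using eventually_nhds_in_open[OF open_ball, of 0 0 1] subord p_def
    by (auto elim: eventually_mono)
  have "deriv p 0 = deriv w 0"
  proof -
    have "w field_differentiable at 0" "xi field_differentiable at (w 0)"
      using w(1) xi_holomorphic w(3) by (auto intro: holomorphic_on_imp_differentiable_at)
    then have "deriv (\<lambda>z. xi (w z)) 0 = deriv xi (w 0) * deriv w 0"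
      by (rule deriv_chain[unfolded o_def])
    then show ?thesis
      using deriv_cong_ev[OF near_0 refl] xi_derivs_at_0 w(3) by simp
  qed
  moreover have "(deriv ^^ 2) p 0 = 2 * (deriv w 0)\<^sup>2 + (deriv ^^ 2) w 0"
    using higher_deriv_cong_ev[OF near_0 refl]
      higher_deriv_2_compose[OF xi_holomorphic w(1) open_ball open_ball w(2)]
      xi_derivs_at_0 w(3) by simp
  moreover have "p 0 = 1"
    by (simp add: p_def zf_over_f_def)
  ultimately show ?thesis
    using coeff0_2_3_of_z_deriv_eq_mult[OF holf holp open_ball _ f0 f'0 _ ode]
    by (simp add: field_simps power2_eq_square)
qed

lemma S_star_xi_extremal: "\<exists>F\<in>S_star_xi. \<forall>z\<in>unit_disc. zf_over_f F z = xi (z\<^sup>2)"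
proof -
  have sq: "(\<lambda>z. z\<^sup>2) holomorphic_on unit_disc" "(\<lambda>z::complex. z\<^sup>2) ` unit_disc \<subseteq> unit_disc"
    by (auto intro: holomorphic_intros simp: norm_power power_less_one_iff)
  then have hol: "(\<lambda>z. xi (z\<^sup>2)) holomorphic_on unit_disc"
    using holomorphic_on_compose_gen[OF _ xi_holomorphic] by (simp add: o_def)
  obtain F where F: "F \<in> classA" "\<forall>z\<in>unit_disc. z \<noteq> 0 \<longrightarrow> F z \<noteq> 0"
      "\<forall>z\<in>unit_disc. zf_over_f F z = xi (z\<^sup>2)"
    using exists_classA_with_zf_over_f[OF hol] by (auto simp: xi_def)
  have "zf_over_f F holomorphic_on unit_disc"
    using hol by (rule holomorphic_transform) (use F(3) in auto)
  then have "F \<in> S_star_xi"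
    using F sq xi_holomorphic by (auto simp: S_star_xi_def subordinate_def intro!: exI[of _ "\<lambda>z. z\<^sup>2"])
  with F(3) show ?thesis by blast
qed

theorem corollary3p4:
  shows "(\<forall>f\<in>S_star_xi. norm (coeff0 f 3 - (coeff0 f 2)\<^sup>2) \<le> 1/2) \<and>
         (\<exists>f\<in>S_star_xi. norm (coeff0 f 3 - (coeff0 f 2)\<^sup>2) = 1/2)"
proof (intro conjI ballI)
  fix f assume f: "f \<in> S_star_xi"
  then obtain w where w: "w holomorphic_on unit_disc" "w ` unit_disc \<subseteq> unit_disc" "w 0 = 0"
      "\<forall>z\<in>unit_disc. zf_over_f f z = xi (w z)"
    by (auto simp: S_star_xi_def subordinate_def)
  have "norm ((deriv ^^ 2) w 0) \<le> 2"
    using norm_higher_deriv_le_of_bounded_on_ball[OF w(1), of 1 2] w(2) by (force simp: less_imp_le)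
  then show "norm (coeff0 f 3 - (coeff0 f 2)\<^sup>2) \<le> 1/2"
    unfolding S_star_xi_fekete_szego_eq[OF f w] by (simp add: norm_divide)
next
  obtain F where F: "F \<in> S_star_xi" "\<forall>z\<in>unit_disc. zf_over_f F z = xi (z\<^sup>2)"
    using S_star_xi_extremal by blast
  have "coeff0 F 3 - (coeff0 F 2)\<^sup>2 = (deriv ^^ 2) (\<lambda>z. z\<^sup>2) 0 / 4"
    using F by (intro S_star_xi_fekete_szego_eq)
      (auto intro: holomorphic_intros simp: norm_power power_less_one_iff)
  also have "\<dots> = 1/2"
    using higher_deriv_power[of 2 0 2 0] by (simp add: numeral_2_eq_2 pochhammer_Suc)
  finally have extremal_value: "coeff0 F 3 - (coeff0 F 2)\<^sup>2 = 1/2" .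
  show "\<exists>f\<in>S_star_xi. norm (coeff0 f 3 - (coeff0 f 2)\<^sup>2) = 1/2"
    using F(1) by (intro bexI[of _ F]) (simp_all add: extremal_value)
qed

end
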